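(* Let $\mathbb{F}_q$ be a finite field, $n\ge1$, and $C\le\mathbb{F}_q^n$ a linear code. Suppose there exists a regular subgroup $G$ of $S_n$ having a coprime cyclic decomposition and such that $\langle G, C_{S_n}(G)\rangle\le\mathrm{PAut}(C)$. Then $C$ is a cyclic group code.
   Context: $\mathcal{B}=\{e_1,\dots,e_n\}$ is the standard basis of $\mathbb{F}_q^n$; $\sigma\in S_n$ acts by $\sigma(\sum a_ie_i)=\sum a_ie_{\sigma(i)}$ and $\mathrm{PAut}(C)=\{\sigma\in S_n:\sigma(C)=C\}$. A subgroup of $S_n$ is regular if it has order $n$ and acts transitively on $\{1,\dots,n\}$; $C_{S_n}(G)$ is the centralizer of $G$ in $S_n$. A finite group $G$ has a coprime cyclic decomposition if there exist cyclic subgroups $A,B\le G$ with $\gcd(|A|,|B|)=1$ and $G=AB=\{ab:a\in A,b\in B\}$. For a finite group $H$ of order $n$, $C$ is an $H$-code if there is a bijection $\phi:\mathcal{B}\to H$ whose $\mathbb{F}_q$-linear extension $\tilde\phi:\mathbb{F}_q^n\to\mathbb{F}_q[H]$ maps $C$ onto a two-sided ideal of $\mathbb{F}_q[H]$; $C$ is a cyclic group code if it is an $H$-code for some cyclic group $H$. *)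

theory Defs
  imports "HOL-Algebra.Sym_Groups" "HOL-Algebra.Elementary_Groups"
begin

text \<open>Vectors of F_q^n: functions on the index set {1..n}, zero outside.
  e_i corresponds to the indicator of i.\<close>
definition vecs :: "nat \<Rightarrow> (nat \<Rightarrow> 'a::zero) set" where
  "vecs n = {v. \<forall>i. i \<notin> {1..n} \<longrightarrow> v i = 0}"

definition linear_code :: "nat \<Rightarrow> (nat \<Rightarrow> 'a::field) set \<Rightarrow> bool" where
  "linear_code n C \<longleftrightarrow> C \<subseteq> vecs n \<and> (\<lambda>i. 0) \<in> C \<and>
     (\<forall>u\<in>C. \<forall>v\<in>C. (\<lambda>i. u i + v i) \<in> C) \<and> (\<forall>c. \<forall>v\<in>C. (\<lambda>i. c * v i) \<in> C)"

text \<open>sigma (sum a_i e_i) = sum a_i e_(sigma i), i.e. the new coordinate at sigma i is a_i.\<close>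
definition perm_act :: "(nat \<Rightarrow> nat) \<Rightarrow> (nat \<Rightarrow> 'a) \<Rightarrow> (nat \<Rightarrow> 'a)" where
  "perm_act \<sigma> v = (\<lambda>j. v (Hilbert_Choice.inv \<sigma> j))"

definition PAut :: "nat \<Rightarrow> (nat \<Rightarrow> 'a) set \<Rightarrow> (nat \<Rightarrow> nat) set" where
  "PAut n C = {\<sigma> \<in> carrier (sym_group n). perm_act \<sigma> ` C = C}"

definition regular_subgroup :: "nat \<Rightarrow> (nat \<Rightarrow> nat) set \<Rightarrow> bool" where
  "regular_subgroup n G \<longleftrightarrow> subgroup G (sym_group n) \<and> card G = n \<and>
     (\<forall>i\<in>{1..n}. \<forall>j\<in>{1..n}. \<exists>g\<in>G. g i = j)"

definition centralizer_Sn :: "nat \<Rightarrow> (nat \<Rightarrow> nat) set \<Rightarrow> (nat \<Rightarrow> nat) set" where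
  "centralizer_Sn n G = {\<sigma> \<in> carrier (sym_group n). \<forall>g\<in>G. \<sigma> \<circ> g = g \<circ> \<sigma>}"

definition coprime_cyclic_decomposition :: "('g, 'b) monoid_scheme \<Rightarrow> bool" where
  "coprime_cyclic_decomposition K \<longleftrightarrow>
     (\<exists>A B. subgroup A K \<and> subgroup B K \<and>
        cyclic_group (K\<lparr>carrier := A\<rparr>) \<and> cyclic_group (K\<lparr>carrier := B\<rparr>) \<and>
        coprime (card A) (card B) \<and>
        carrier K = {a \<otimes>\<^bsub>K\<^esub> b | a b. a \<in> A \<and> b \<in> B})"

definition group_alg :: "('h, 'b) monoid_scheme \<Rightarrow> ('h \<Rightarrow> 'a::field) set" where
  "group_alg H = {f. \<forall>x. x \<notin> carrier H \<longrightarrow> f x = 0}"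

definition conv :: "('h, 'b) monoid_scheme \<Rightarrow> ('h \<Rightarrow> 'a::field) \<Rightarrow> ('h \<Rightarrow> 'a) \<Rightarrow> ('h \<Rightarrow> 'a)" where
  "conv H f g = (\<lambda>h. if h \<in> carrier H
      then (\<Sum>x\<in>carrier H. f x * g (inv\<^bsub>H\<^esub> x \<otimes>\<^bsub>H\<^esub> h)) else 0)"

definition two_sided_ideal :: "('h, 'b) monoid_scheme \<Rightarrow> ('h \<Rightarrow> 'a::field) set \<Rightarrow> bool" where
  "two_sided_ideal H I \<longleftrightarrow> I \<subseteq> group_alg H \<and> (\<lambda>h. 0) \<in> I \<and>
     (\<forall>x\<in>I. \<forall>y\<in>I. (\<lambda>h. x h + y h) \<in> I) \<and> (\<forall>x\<in>I. (\<lambda>h. - x h) \<in> I) \<and>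
     (\<forall>f\<in>group_alg H. \<forall>x\<in>I. conv H f x \<in> I \<and> conv H x f \<in> I)"

text \<open>F_q-linear extension of phi : basis -> H (basis vector e_i identified with index i).\<close>
definition lin_ext :: "('h, 'b) monoid_scheme \<Rightarrow> nat \<Rightarrow> (nat \<Rightarrow> 'h) \<Rightarrow> (nat \<Rightarrow> 'a::zero) \<Rightarrow> ('h \<Rightarrow> 'a)" where
  "lin_ext H n \<phi> v = (\<lambda>h. if h \<in> carrier H then v (inv_into {1..n} \<phi> h) else 0)"

definition is_H_code :: "nat \<Rightarrow> ('h, 'b) monoid_scheme \<Rightarrow> (nat \<Rightarrow> 'a::field) set \<Rightarrow> bool" where
  "is_H_code n H C \<longleftrightarrow> group H \<and> card (carrier H) = n \<and>
     (\<exists>\<phi>. bij_betw \<phi> {1..n} (carrier H) \<and> two_sided_ideal H (lin_ext H n \<phi> ` C))"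

text \<open>Groups are taken up to isomorphism, realised with carrier in nat (every finite group is).\<close>
definition cyclic_group_code :: "nat \<Rightarrow> (nat \<Rightarrow> 'a::field) set \<Rightarrow> bool" where
  "cyclic_group_code n C \<longleftrightarrow> (\<exists>H :: nat monoid. cyclic_group H \<and> is_H_code n H C)"

end

theory Submission
  imports Defs "HOL-Algebra.Multiplicative_Group"
begin

(* Write G = AB with A = <a>, B = <b> cyclic of coprime orders p and q, so that n = |G| <= pq.
   Right multiplication by b, transported to the coordinates via the regular action, is a
   permutation rho centralizing G, and sigma = a rho satisfies sigma^m 1 = a^m (b^m 1).
   If a^k b^k = a^l b^l with k < l, then a^(l-k) = b^(k-l) lies in A \<inter> B = 1, so pq divides l - k.
   Hence sigma is an n-cycle; numbering the coordinates along it turns sigma into translation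
   by 1 in Z/n, and a sigma-invariant linear code becomes a translation-invariant subspace,
   i.e. an ideal, of F[Z/n]. *)

(* Z/n with carrier in nat, as required by cyclic_group_code (integer_mod_group lives on int). *)
definition nat_mod_group :: "nat \<Rightarrow> nat monoid" where
  "nat_mod_group n = \<lparr>carrier = {..<n}, monoid.mult = (\<lambda>x y. (x + y) mod n), one = 0\<rparr>"

lemma nat_mod_group_simps [simp]:
  "carrier (nat_mod_group n) = {..<n}"
  "x \<otimes>\<^bsub>nat_mod_group n\<^esub> y = (x + y) mod n"
  "\<one>\<^bsub>nat_mod_group n\<^esub> = 0"
  by (simp_all add: nat_mod_group_def)

lemma comm_group_nat_mod_group:
  assumes "n \<ge> 1"
  shows "comm_group (nat_mod_group n)"
proof (rule comm_groupI)
  fix x assume "x \<in> carrier (nat_mod_group n)"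
  then show "\<exists>y\<in>carrier (nat_mod_group n). y \<otimes>\<^bsub>nat_mod_group n\<^esub> x = \<one>\<^bsub>nat_mod_group n\<^esub>"
    by (intro bexI[of _ "(n - x) mod n"]) (auto simp: mod_add_left_eq)
qed (use assms in \<open>auto simp: mod_add_left_eq mod_add_right_eq ac_simps\<close>)

lemma cyclic_group_nat_mod_group:
  assumes "n \<ge> 1"
  shows "cyclic_group (nat_mod_group n)"
proof -
  have grp: "group (nat_mod_group n)"
    using comm_group_nat_mod_group[OF assms] by (rule comm_group.axioms)
  define g where "g = 1 mod n"
  have g: "g \<in> carrier (nat_mod_group n)" using assms by (simp add: g_def)
  have pow_g: "g [^]\<^bsub>nat_mod_group n\<^esub> k = k mod n" for k :: nat
    by (induction k) (simp_all add: g_def mod_Suc_eq mod_add_right_eq)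
  have generated: "carrier (nat_mod_group n) = range (\<lambda>k::int. g [^]\<^bsub>nat_mod_group n\<^esub> k)"
  proof (intro equalityI subsetI)
    fix x assume "x \<in> carrier (nat_mod_group n)"
    then have "x = g [^]\<^bsub>nat_mod_group n\<^esub> int x"
      using grp by (simp add: int_pow_int pow_g)
    then show "x \<in> range (\<lambda>k::int. g [^]\<^bsub>nat_mod_group n\<^esub> k)" by blast
  next
    fix x assume "x \<in> range (\<lambda>k::int. g [^]\<^bsub>nat_mod_group n\<^esub> k)"
    with g grp show "x \<in> carrier (nat_mod_group n)" by (metis group.int_pow_closed rangeE)
  qed
  with g show ?thesis
    using group.cyclic_group[OF grp] by blast
qed

lemma linear_code_sum:
  assumes "linear_code n C" "finite I" "\<And>x. x \<in> I \<Longrightarrow> u x \<in> C"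
  shows "(\<lambda>i. \<Sum>x\<in>I. c x * u x i) \<in> C"
  using assms(2,3)
proof (induction I rule: finite_induct)
  case empty
  then show ?case using assms(1) by (simp add: linear_code_def)
next
  case (insert x I)
  then have "(\<lambda>i. c x * u x i) \<in> C" "(\<lambda>i. \<Sum>x\<in>I. c x * u x i) \<in> C"
    using assms(1) by (simp_all add: linear_code_def)
  then show ?case using assms(1) insert(1,2) by (simp add: linear_code_def)
qed

lemma perm_act_invariant_funpow:
  assumes "inj \<sigma>" "perm_act \<sigma> ` C = C" "v \<in> C"
  shows "(\<lambda>i. v ((\<sigma> ^^ m) i)) \<in> C"
proof (induction m)
  case 0
  then show ?case using assms(3) by simp
next
  case (Suc m)
  then obtain w where w: "w \<in> C" and v_eq: "(\<lambda>i. v ((\<sigma> ^^ m) i)) = perm_act \<sigma> w"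
    using assms(2) by (metis imageE)
  have "v ((\<sigma> ^^ Suc m) i) = w i" for i
  proof -
    have "v ((\<sigma> ^^ Suc m) i) = v ((\<sigma> ^^ m) (\<sigma> i))"
      by (simp only: funpow_Suc_right comp_apply)
    also have "\<dots> = perm_act \<sigma> w (\<sigma> i)"
      using fun_cong[OF v_eq, of "\<sigma> i"] by simp
    also have "\<dots> = w i"
      using assms(1) by (simp add: perm_act_def)
    finally show ?thesis .
  qed
  then show ?case using w by simp
qed

lemma permutes_full_orbit:
  assumes "\<sigma> permutes S" "finite S" "card S = n" "x \<in> S"
    and inj: "inj_on (\<lambda>m. (\<sigma> ^^ m) x) {..<n}"
  shows "bij_betw (\<lambda>m. (\<sigma> ^^ m) x) {..<n} S" and "(\<sigma> ^^ n) x = x"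
proof -
  have orbit_in: "(\<sigma> ^^ m) x \<in> S" for m
    using assms(1,4) by (induction m) (auto simp: permutes_in_image)
  then have orbit: "(\<lambda>m. (\<sigma> ^^ m) x) ` {..<n} = S"
    using inj assms(2,3) by (intro card_subset_eq) (auto simp: card_image)
  then show "bij_betw (\<lambda>m. (\<sigma> ^^ m) x) {..<n} S"
    using inj by (simp add: bij_betw_def)
  have "(\<sigma> ^^ n) x \<in> (\<lambda>m. (\<sigma> ^^ m) x) ` {..<n}"
    using orbit_in[of n] orbit by simp
  then obtain j where j: "j < n" "(\<sigma> ^^ n) x = (\<sigma> ^^ j) x"
    by auto
  have "inj (\<sigma> ^^ j)"
    using assms(1) by (simp add: permutes_inj)
  moreover have "(\<sigma> ^^ j) ((\<sigma> ^^ (n - j)) x) = (\<sigma> ^^ j) x"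
    using j by (simp flip: funpow_add comp_apply[of "\<sigma> ^^ j"])
  ultimately have "(\<sigma> ^^ (n - j)) x = (\<sigma> ^^ 0) x"
    by (simp add: inj_eq)
  then have "j = 0"
    using j(1) inj_onD[OF inj, of "n - j" 0] by (cases "j = 0") auto
  then show "(\<sigma> ^^ n) x = x" using j by simp
qed

lemma conv_commute:
  assumes "comm_group H"
  shows "conv H f g = conv H g f"
proof
  interpret comm_group H by fact
  fix h
  show "conv H f g h = conv H g f h"
  proof (cases "h \<in> carrier H")
    case True
    have "(\<Sum>x\<in>carrier H. f x * g (inv\<^bsub>H\<^esub> x \<otimes>\<^bsub>H\<^esub> h))
        = (\<Sum>y\<in>carrier H. g y * f (inv\<^bsub>H\<^esub> y \<otimes>\<^bsub>H\<^esub> h))"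
      by (rule sum.reindex_bij_witness[where i = "\<lambda>x. inv\<^bsub>H\<^esub> x \<otimes>\<^bsub>H\<^esub> h"
            and j = "\<lambda>x. inv\<^bsub>H\<^esub> x \<otimes>\<^bsub>H\<^esub> h"])
        (use True in \<open>auto simp: inv_mult m_assoc m_comm m_lcomm mult.commute\<close>)
    then show ?thesis by (simp add: conv_def)
  qed (simp add: conv_def)
qed

lemma lin_ext_inv_into:
  assumes "bij_betw \<psi> (carrier H) {1..n}"
  shows "lin_ext H n (inv_into (carrier H) \<psi>) v = (\<lambda>h. if h \<in> carrier H then v (\<psi> h) else 0)"
  using inv_into_inv_into_eq[OF assms] by (auto simp: lin_ext_def)

lemma two_sided_ideal_cyclic_shift:
  fixes C :: "(nat \<Rightarrow> 'a::field) set"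
  assumes n: "n \<ge> 1" and code: "linear_code n C" and "inj \<sigma>" "perm_act \<sigma> ` C = C"
    and shift: "\<And>k h. h < n \<Longrightarrow> \<psi> ((k + h) mod n) = (\<sigma> ^^ k) (\<psi> h)"
  defines "E \<equiv> \<lambda>v h. if h < n then v (\<psi> h) else 0"
  shows "two_sided_ideal (nat_mod_group n) (E ` C)"
proof -
  let ?Z = "nat_mod_group n"
  have conv_left: "conv ?Z f (E v) \<in> E ` C" if "v \<in> C" for f v
  proof -
    define w where "w = (\<lambda>i. \<Sum>x<n. f x * v ((\<sigma> ^^ inv\<^bsub>?Z\<^esub> x) i))"
    have "w \<in> C"
      unfolding w_def using code perm_act_invariant_funpow[OF assms(3,4) that]
      by (intro linear_code_sum) auto
    moreover have "conv ?Z f (E v) = E w"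
      using n by (auto simp: conv_def E_def w_def shift)
    ultimately show ?thesis by blast
  qed
  show ?thesis
    unfolding two_sided_ideal_def
  proof (intro conjI ballI)
    show "E ` C \<subseteq> group_alg ?Z" by (auto simp: group_alg_def E_def)
    have "(\<lambda>i. 0) \<in> C" using code by (simp add: linear_code_def)
    then show "(\<lambda>h. 0) \<in> E ` C" by (force simp: E_def)
  next
    fix x y assume "x \<in> E ` C" "y \<in> E ` C"
    then obtain u v where "u \<in> C" "v \<in> C" "x = E u" "y = E v" by blast
    moreover have "(\<lambda>i. u i + v i) \<in> C" using code calculation by (simp add: linear_code_def)
    ultimately show "(\<lambda>h. x h + y h) \<in> E ` C" by (force simp: E_def)
  next
    fix x assume "x \<in> E ` C"
    then obtain u where "u \<in> C" "x = E u" by blast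
    moreover have "(\<lambda>i. (- 1) * u i) \<in> C" using code calculation unfolding linear_code_def by blast
    ultimately show "(\<lambda>h. - x h) \<in> E ` C" by (force simp: E_def)
  next
    fix f x assume "x \<in> E ` C"
    then show "conv ?Z f x \<in> E ` C" using conv_left by blast
    then show "conv ?Z x f \<in> E ` C"
      by (simp add: conv_commute[OF comm_group_nat_mod_group[OF n]])
  qed
qed

lemma cyclic_group_code_of_full_cycle:
  fixes C :: "(nat \<Rightarrow> 'a::field) set"
  assumes n: "n \<ge> 1" and code: "linear_code n C"
    and \<sigma>: "\<sigma> permutes {1..n}" "perm_act \<sigma> ` C = C"
    and inj: "inj_on (\<lambda>m. (\<sigma> ^^ m) 1) {..<n}"
  shows "cyclic_group_code n C"
proof -
  define \<psi> where "\<psi> = (\<lambda>m. (\<sigma> ^^ m) 1)"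
  have bij: "bij_betw \<psi> {..<n} {1..n}" and period: "\<psi> n = 1"
    using permutes_full_orbit[OF \<sigma>(1) _ _ _ inj] n by (simp_all add: \<psi>_def)
  have shift: "\<psi> ((k + h) mod n) = (\<sigma> ^^ k) (\<psi> h)" for k h
    using funpow_mod_eq[where f = \<sigma> and n = n and x = 1] period by (simp add: \<psi>_def funpow_add)
  define \<phi> where "\<phi> = inv_into {..<n} \<psi>"
  define E where "E = (\<lambda>(v :: nat \<Rightarrow> 'a) h. if h < n then v (\<psi> h) else 0)"
  have "lin_ext (nat_mod_group n) n \<phi> = E"
  proof
    fix v
    show "lin_ext (nat_mod_group n) n \<phi> v = E v"
      using lin_ext_inv_into[where H = "nat_mod_group n"] bij by (simp add: \<phi>_def E_def)
  qed
  moreover have "two_sided_ideal (nat_mod_group n) (E ` C)"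
    unfolding E_def
    using two_sided_ideal_cyclic_shift[OF n code permutes_inj[OF \<sigma>(1)] \<sigma>(2)] shift by blast
  moreover have "bij_betw \<phi> {1..n} (carrier (nat_mod_group n))"
    using bij_betw_inv_into[OF bij] by (simp add: \<phi>_def)
  ultimately have "is_H_code n (nat_mod_group n) C"
    using comm_group_nat_mod_group[OF n] by (auto simp: is_H_code_def comm_group.axioms)
  then show ?thesis
    using cyclic_group_nat_mod_group[OF n] by (auto simp: cyclic_group_code_def)
qed

lemma sym_group_pow: "x [^]\<^bsub>sym_group n\<^esub> (k :: nat) = x ^^ k"
  by (induction k) (simp_all add: sym_group_mult sym_group_one funpow_swap1)

lemma (in group) subgroup_nat_pow_closed:
  assumes "subgroup H G" "x \<in> H"
  shows "x [^] (k :: nat) \<in> H"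
  using subgroup_int_pow_closed[OF assms, of "int k"] by (simp add: int_pow_int)

lemma (in group) ord_dvd_card_subgroup:
  assumes "subgroup H G" "finite H" "x \<in> H"
  shows "ord x dvd card H"
proof -
  interpret H: group "G\<lparr>carrier := H\<rparr>"
    using subgroup_imp_group[OF assms(1)] .
  have "x [^] card H = \<one>"
    using H.pow_order_eq_1[of x] assms(3) by (simp add: order_def flip: nat_pow_consistent)
  then show ?thesis
    using pow_eq_id[OF subgroup.mem_carrier[OF assms(1,3)]] by simp
qed

lemma (in group) cyclic_subgroup_generator:
  assumes "subgroup H G" "finite H" "cyclic_group (G\<lparr>carrier := H\<rparr>)"
  obtains a where "a \<in> H" "ord a = card H"
proof -
  interpret H: group "G\<lparr>carrier := H\<rparr>"
    using subgroup_imp_group[OF assms(1)] .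
  obtain a where a: "a \<in> H" "subgroup_generated (G\<lparr>carrier := H\<rparr>) {a} = G\<lparr>carrier := H\<rparr>"
    using assms(3) unfolding cyclic_group_def by auto
  have "H.ord a = ord a"
    unfolding H.ord_def ord_def by (simp flip: nat_pow_consistent)
  moreover have "H.ord a = card H"
    using H.cyclic_order_is_ord[of a] a by (simp add: order_def)
  ultimately show ?thesis using that a(1) by simp
qed

lemma (in group) inj_on_pow_mult_pow:
  assumes A: "subgroup A G" "finite A" and B: "subgroup B G" "finite B"
    and coprime: "coprime (card A) (card B)"
    and a: "a \<in> A" "ord a = card A" and b: "b \<in> B" "ord b = card B"
  shows "inj_on (\<lambda>m. a [^] m \<otimes> b [^] m) {..<card A * card B}"
proof (rule linorder_inj_onI')
  fix k l assume "k \<in> {..<card A * card B}" "l \<in> {..<card A * card B}" "k < l"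
  moreover define d where "d = l - k"
  ultimately have l: "l = k + d" and d: "0 < d" "d < card A * card B"
    by auto
  have [simp]: "a \<in> carrier G" "b \<in> carrier G"
    using subgroup.mem_carrier[OF A(1) a(1)] subgroup.mem_carrier[OF B(1) b(1)] by simp_all
  have al: "a [^] l = a [^] k \<otimes> a [^] d" and bl: "b [^] l = b [^] d \<otimes> b [^] k"
    by (simp_all add: l nat_pow_mult add.commute)
  show "a [^] k \<otimes> b [^] k \<noteq> a [^] l \<otimes> b [^] l"
  proof
    assume "a [^] k \<otimes> b [^] k = a [^] l \<otimes> b [^] l"
    then have "a [^] k \<otimes> (a [^] d \<otimes> b [^] d) \<otimes> b [^] k = a [^] k \<otimes> \<one> \<otimes> b [^] k"
      by (simp add: al bl m_assoc)
    then have cancel: "a [^] d \<otimes> b [^] d = \<one>"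
      by simp
    then have "a [^] d = inv (b [^] d)"
      by (simp add: inv_equality)
    then have "a [^] d \<in> B"
      using subgroup.m_inv_closed[OF B(1) subgroup_nat_pow_closed[OF B(1) b(1)]] by simp
    moreover have "a [^] d \<in> A"
      using subgroup_nat_pow_closed[OF A(1) a(1)] .
    ultimately have "ord (a [^] d) dvd gcd (card A) (card B)"
      using ord_dvd_card_subgroup A B by simp
    then have "a [^] d = \<one>"
      using coprime ord_eq_1[of "a [^] d"] by simp
    moreover have "b [^] d = \<one>"
      using cancel calculation by simp
    ultimately have "card A * card B dvd d"
      using a b coprime by (simp add: pow_eq_id divides_mult)
    then show False
      using d by (simp add: nat_dvd_not_less)
  qed
qed

lemma regular_subgroup_permutes:
  assumes "regular_subgroup n G" "g \<in> G"
  shows "g permutes {1..n}"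
  using assms subgroup.subset by (fastforce simp: regular_subgroup_def sym_group_carrier)

lemma regular_subgroup_bij_betw_eval:
  assumes reg: "regular_subgroup n G" and x: "x \<in> {1..n}"
  shows "bij_betw (\<lambda>g. g x) G {1..n}"
proof -
  have "(\<lambda>g. g x) ` G = {1..n}"
  proof
    show "(\<lambda>g. g x) ` G \<subseteq> {1..n}"
    proof (rule image_subsetI)
      fix g assume "g \<in> G"
      then show "g x \<in> {1..n}"
        using permutes_in_image[OF regular_subgroup_permutes[OF reg]] x by blast
    qed
    show "{1..n} \<subseteq> (\<lambda>g. g x) ` G"
    proof
      fix j assume "j \<in> {1..n}"
      then obtain g where "g \<in> G" "g x = j"
        using reg x unfolding regular_subgroup_def by blast
      then show "j \<in> (\<lambda>g. g x) ` G" by blast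
    qed
  qed
  moreover have "finite G"
    using reg x by (intro card_ge_0_finite) (auto simp: regular_subgroup_def)
  ultimately show ?thesis
    using reg by (simp add: bij_betw_def eq_card_imp_inj_on regular_subgroup_def)
qed

(* Right multiplication by b on G, transported to {1..n} along the bijection g \<mapsto> g 1. *)
definition right_translation :: "nat \<Rightarrow> (nat \<Rightarrow> nat) set \<Rightarrow> (nat \<Rightarrow> nat) \<Rightarrow> nat \<Rightarrow> nat" where
  "right_translation n G b i = (if i \<in> {1..n} then inv_into G (\<lambda>g. g 1) i (b 1) else i)"

context
  fixes n G b
  assumes reg: "regular_subgroup n G" and n: "n \<ge> 1" and b: "b \<in> G"
begin

private lemma one_in_range: "1 \<in> {1..n}"
  using n by simp

lemma right_translation_eval:
  assumes "g \<in> G"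
  shows "right_translation n G b (g 1) = g (b 1)"
proof -
  have "g 1 \<in> {1..n}"
    using permutes_in_image[OF regular_subgroup_permutes[OF reg assms]] one_in_range by blast
  moreover have "inv_into G (\<lambda>g. g 1) (g 1) = g"
    using inv_into_f_f[OF bij_betw_imp_inj_on[OF regular_subgroup_bij_betw_eval[OF reg one_in_range]] assms]
    by simp
  ultimately show ?thesis by (auto simp: right_translation_def)
qed

lemma right_translation_commute:
  assumes g: "g \<in> G"
  shows "right_translation n G b (g x) = g (right_translation n G b x)"
proof (cases "x \<in> {1..n}")
  case True
  then have "x \<in> (\<lambda>g. g 1) ` G"
    using regular_subgroup_bij_betw_eval[OF reg one_in_range] by (simp add: bij_betw_def)
  then obtain h where h: "h \<in> G" "x = h 1"
    by blast
  moreover have "g \<circ> h \<in> G"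
    using subgroup.m_closed[of G "sym_group n" g h] reg g h by (simp add: regular_subgroup_def sym_group_mult)
  ultimately show ?thesis
    using right_translation_eval g by (metis comp_apply)
next
  case False
  moreover have "g x = x"
    using permutes_not_in[OF regular_subgroup_permutes[OF reg g] False] .
  ultimately show ?thesis by (auto simp: right_translation_def)
qed

lemma right_translation_permutes: "right_translation n G b permutes {1..n}"
proof (rule bij_imp_permutes)
  have "b 1 \<in> {1..n}"
    using permutes_in_image[OF regular_subgroup_permutes[OF reg b]] one_in_range by blast
  then have "bij_betw ((\<lambda>g. g (b 1)) \<circ> inv_into G (\<lambda>g. g 1)) {1..n} {1..n}"
    using regular_subgroup_bij_betw_eval[OF reg] one_in_range
    by (blast intro: bij_betw_trans bij_betw_inv_into)
  then show "bij_betw (right_translation n G b) {1..n} {1..n}"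
    by (rule bij_betw_cong[THEN iffD1, rotated]) (simp add: right_translation_def)
qed (auto simp: right_translation_def)

lemma right_translation_centralizer: "right_translation n G b \<in> centralizer_Sn n G"
  using right_translation_permutes right_translation_commute
  by (auto simp: centralizer_Sn_def sym_group_carrier)

end

lemma regular_subgroup_funpow_closed:
  assumes "regular_subgroup n G" "g \<in> G"
  shows "g ^^ m \<in> G"
  using group.subgroup_nat_pow_closed[OF sym_group_is_group, of G n g m] assms
  by (simp add: regular_subgroup_def sym_group_pow)

lemma coprime_cyclic_decomposition_inj_pow:
  assumes n: "n \<ge> 1" and reg: "regular_subgroup n G"
    and decomp: "coprime_cyclic_decomposition ((sym_group n)\<lparr>carrier := G\<rparr>)"
  obtains a b where "a \<in> G" "b \<in> G" "inj_on (\<lambda>m. a ^^ m \<circ> b ^^ m) {..<n}"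
proof -
  interpret S: group "sym_group n"
    by (rule sym_group_is_group)
  have sub: "subgroup G (sym_group n)" and card: "card G = n"
    using reg by (simp_all add: regular_subgroup_def)
  obtain A B where A: "subgroup A ((sym_group n)\<lparr>carrier := G\<rparr>)"
    and B: "subgroup B ((sym_group n)\<lparr>carrier := G\<rparr>)"
    and cyclic: "cyclic_group ((sym_group n)\<lparr>carrier := A\<rparr>)" "cyclic_group ((sym_group n)\<lparr>carrier := B\<rparr>)"
    and coprime: "coprime (card A) (card B)"
    and G_eq: "G = {x \<circ> y | x y. x \<in> A \<and> y \<in> B}"
    using decomp unfolding coprime_cyclic_decomposition_def by (auto simp: sym_group_mult)
  have AG: "A \<subseteq> G" and BG: "B \<subseteq> G"
    using subgroup.subset[OF A] subgroup.subset[OF B] by simp_all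
  have AS: "subgroup A (sym_group n)" and BS: "subgroup B (sym_group n)"
    using S.incl_subgroup[OF sub A] S.incl_subgroup[OF sub B] .
  have "finite G"
    using card n by (intro card_ge_0_finite) simp
  then have fin: "finite A" "finite B"
    using AG BG finite_subset by blast+
  obtain a where a: "a \<in> A" "S.ord a = card A"
    using S.cyclic_subgroup_generator[OF AS fin(1) cyclic(1)] .
  obtain b where b: "b \<in> B" "S.ord b = card B"
    using S.cyclic_subgroup_generator[OF BS fin(2) cyclic(2)] .
  have "G = (\<lambda>(x, y). x \<circ> y) ` (A \<times> B)"
    using G_eq by auto
  then have "n \<le> card A * card B"
    using card card_image_le[OF finite_cartesian_product[OF fin], of "\<lambda>(x, y). x \<circ> y"]
    by (simp add: card_cartesian_product)
  then have "inj_on (\<lambda>m. a [^]\<^bsub>sym_group n\<^esub> m \<otimes>\<^bsub>sym_group n\<^esub> b [^]\<^bsub>sym_group n\<^esub> m) {..<n}"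
    by (intro inj_on_subset[OF S.inj_on_pow_mult_pow[OF AS fin(1) BS fin(2) coprime a b]]) auto
  moreover have "a \<in> G" "b \<in> G"
    using a b AG BG by auto
  ultimately show ?thesis
    using that by (simp add: sym_group_pow sym_group_mult)
qed

lemma regular_subgroup_full_cycle:
  assumes reg: "regular_subgroup n G" and n: "n \<ge> 1" and "a \<in> G" "b \<in> G"
    and inj: "inj_on (\<lambda>m. a ^^ m \<circ> b ^^ m) {..<n}"
  obtains \<sigma> where "\<sigma> \<in> generate (sym_group n) (G \<union> centralizer_Sn n G)"
    and "inj_on (\<lambda>m. (\<sigma> ^^ m) 1) {..<n}"
proof -
  define \<rho> where "\<rho> = right_translation n G b"
  have \<rho>: "\<rho> \<in> centralizer_Sn n G" "\<And>g. g \<in> G \<Longrightarrow> \<rho> (g 1) = g (b 1)"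
    using right_translation_centralizer right_translation_eval reg n \<open>b \<in> G\<close>
    unfolding \<rho>_def by blast+
  define \<sigma> where "\<sigma> = a \<circ> \<rho>"
  have "a \<otimes>\<^bsub>sym_group n\<^esub> \<rho> \<in> generate (sym_group n) (G \<union> centralizer_Sn n G)"
    using \<open>a \<in> G\<close> \<rho>(1) by (intro generate.eng generate.incl) auto
  then have "\<sigma> \<in> generate (sym_group n) (G \<union> centralizer_Sn n G)"
    by (simp add: \<sigma>_def sym_group_mult)
  moreover have "(\<sigma> ^^ m) 1 = (a ^^ m \<circ> b ^^ m) 1" for m
  proof -
    have "a \<in> carrier (sym_group n)" "\<rho> \<in> carrier (sym_group n)"
      using regular_subgroup_permutes[OF reg \<open>a \<in> G\<close>] \<rho>(1)
      by (simp_all add: sym_group_carrier centralizer_Sn_def)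
    moreover have "a \<circ> \<rho> = \<rho> \<circ> a"
      using \<rho>(1) \<open>a \<in> G\<close> by (simp add: centralizer_Sn_def)
    ultimately have "\<sigma> ^^ m = a ^^ m \<circ> \<rho> ^^ m"
      using monoid.pow_mult_distrib[OF group.is_monoid[OF sym_group_is_group], where x = a and y = \<rho> and n = m]
      by (simp add: \<sigma>_def sym_group_mult sym_group_pow)
    moreover have "(\<rho> ^^ m) 1 = (b ^^ m) 1"
    proof (induction m)
      case (Suc m)
      then show ?case
        using \<rho>(2)[OF regular_subgroup_funpow_closed[OF reg \<open>b \<in> G\<close>]] by (simp add: funpow_swap1)
    qed simp
    ultimately show ?thesis by simp
  qed
  moreover have "inj_on ((\<lambda>g. g 1) \<circ> (\<lambda>m. a ^^ m \<circ> b ^^ m)) {..<n}"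
  proof (rule comp_inj_on[OF inj inj_on_subset[OF bij_betw_imp_inj_on[OF regular_subgroup_bij_betw_eval[OF reg]]]])
    show "(1::nat) \<in> {1..n}" using n by simp
    have "subgroup G (sym_group n)"
      using reg by (simp add: regular_subgroup_def)
    then show "(\<lambda>m. a ^^ m \<circ> b ^^ m) ` {..<n} \<subseteq> G"
      using subgroup.m_closed regular_subgroup_funpow_closed[OF reg] \<open>a \<in> G\<close> \<open>b \<in> G\<close>
      by (fastforce simp: sym_group_mult)
  qed
  ultimately show ?thesis
    using that by (simp add: comp_def)
qed

theorem theorem3p1:
  fixes C :: "(nat \<Rightarrow> 'a::{field,finite}) set" and n :: nat
  assumes "n \<ge> 1"
    and "linear_code n C"
    and "\<exists>G. regular_subgroup n G \<and>
           coprime_cyclic_decomposition ((sym_group n)\<lparr>carrier := G\<rparr>) \<and>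
           generate (sym_group n) (G \<union> centralizer_Sn n G) \<subseteq> PAut n C"
  shows "cyclic_group_code n C"
proof -
  obtain G where reg: "regular_subgroup n G"
    and decomp: "coprime_cyclic_decomposition ((sym_group n)\<lparr>carrier := G\<rparr>)"
    and PAut: "generate (sym_group n) (G \<union> centralizer_Sn n G) \<subseteq> PAut n C"
    using assms(3) by blast
  obtain a b where "a \<in> G" "b \<in> G" "inj_on (\<lambda>m. a ^^ m \<circ> b ^^ m) {..<n}"
    using coprime_cyclic_decomposition_inj_pow[OF assms(1) reg decomp] .
  then obtain \<sigma> where "\<sigma> \<in> generate (sym_group n) (G \<union> centralizer_Sn n G)"
    and cycle: "inj_on (\<lambda>m. (\<sigma> ^^ m) 1) {..<n}"
    using regular_subgroup_full_cycle[OF reg assms(1)] by blast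
  with PAut have "\<sigma> permutes {1..n}" "perm_act \<sigma> ` C = C"
    by (auto simp: PAut_def sym_group_carrier)
  then show ?thesis
    using cyclic_group_code_of_full_cycle[OF assms(1,2) _ _ cycle] by blast
qed

end
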